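(* There is an absolute constant $C>0$ such that for all integers $n\ge 3$ and $m$ with $n-1\le m\le (n-1)^2/4$, $$\tilde{r}(\mathcal C_{\mathrm{odd}},\mathcal{C}on_{n,m})\le n+2m+C\sqrt{m-n+1}.$$
   Context: Given nonempty families $\mathcal H_1,\mathcal H_2$ of finite graphs, the online size Ramsey game $\mathcal R(\mathcal H_1,\mathcal H_2)$ is played on the edge set of the infinite complete graph $K_{\mathbb N}$: in each round Builder selects a previously unselected edge and Painter colours it red or blue. The game ends as soon as there is a red copy of some graph in $\mathcal H_1$ or a blue copy of some graph in $\mathcal H_2$. Builder tries to end the game as soon as possible, Painter tries to delay it, and $\tilde r(\mathcal H_1,\mathcal H_2)$ is the number of rounds under optimal play. $\mathcal C_{\mathrm{odd}}$ is the family of all odd cycles and $\mathcal{C}on_{n,m}$ is the family of all connected graphs with exactly $n$ vertices and at least $m$ edges. (The paper states the bound as $n+2m+O(\sqrt{m-n+1})$.) *)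

theory Defs
  imports Complex_Main
begin

text \<open>Graphs on the vertex set of the infinite complete graph K_N are represented by
  their edge sets: sets of 2-element subsets of nat.  A graph family is a set of such
  (finite) edge sets, closed under relabelling of vertices; a copy of a member of a
  family in a graph G is a subgraph (subset of edges) of G belonging to the family.\<close>

definition is_edge :: "nat set \<Rightarrow> bool" where
  "is_edge e \<longleftrightarrow> (\<exists>x y. x \<noteq> y \<and> e = {x, y})"

definition verts :: "nat set set \<Rightarrow> nat set" where
  "verts G = \<Union>G"

definition C_odd :: "nat set set set" where
  "C_odd = {G. \<exists>vs. distinct vs \<and> odd (length vs) \<and> length vs \<ge> 3 \<and>
      G = {{vs ! i, vs ! ((i + 1) mod length vs)} | i. i < length vs}}"

text \<open>The family of all connected graphs with exactly n vertices and at least m edges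
  (vertex set = set of endpoints of edges; for n >= 2 a connected graph has no isolated vertices).\<close>
definition Con :: "nat \<Rightarrow> nat \<Rightarrow> nat set set set" where
  "Con n m = {G. finite G \<and> (\<forall>e\<in>G. is_edge e) \<and> card (verts G) = n \<and> card G \<ge> m \<and>
      (\<forall>u\<in>verts G. \<forall>v\<in>verts G. (u, v) \<in> {(x, y). {x, y} \<in> G}\<^sup>*)}"

definition contains_copy :: "nat set set set \<Rightarrow> nat set set \<Rightarrow> bool" where
  "contains_copy \<H> G \<longleftrightarrow> (\<exists>H \<subseteq> G. H \<in> \<H>)"

text \<open>builder_wins H1 H2 k R B: from the position with red edges R and blue edges B,
  Builder can force the game R(H1,H2) to end within at most k further rounds,
  whatever Painter does.\<close>
inductive builder_wins :: "nat set set set \<Rightarrow> nat set set set \<Rightarrow> nat \<Rightarrow> nat set set \<Rightarrow> nat set set \<Rightarrow> bool"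
  for H1 H2 where
  ended: "contains_copy H1 R \<or> contains_copy H2 B \<Longrightarrow> builder_wins H1 H2 k R B"
| step: "\<lbrakk>is_edge e; e \<notin> R; e \<notin> B;
          builder_wins H1 H2 k (insert e R) B; builder_wins H1 H2 k R (insert e B)\<rbrakk>
         \<Longrightarrow> builder_wins H1 H2 (Suc k) R B"

text \<open>Online size Ramsey number: the number of rounds under optimal play (meaningful when
  Builder can force the end in finitely many rounds).\<close>
definition online_ramsey :: "nat set set set \<Rightarrow> nat set set set \<Rightarrow> nat" where
  "online_ramsey H1 H2 = (LEAST k. builder_wins H1 H2 k {} {})"

end

theory Submission
  imports Defs
begin

text \<open>Builder can in fact finish within m + 2n - 2 \<le> n + 2m rounds.

  Builder first offers the edges of a star at a vertex h until Painter has coloured n of them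
  red or n - 1 of them blue, which takes at most 2n - 2 rounds. In the blue case let S consist
  of h and the blue leaves. In the red case let S be the set of red leaves; Builder joins one
  red leaf t to all the others, and Painter must colour these n - 1 edges blue, since a red one
  closes a triangle through h. Either way S has n vertices and contains a spanning blue star.

  Builder then keeps a labelling of the red components together with a proper 2-colouring of
  each. As long as S spans fewer than m blue edges, m \<le> (n - 1)^2 / 4 guarantees an
  uncoloured pair in S whose ends lie on the same side. Colouring it red either closes an odd
  cycle (same component) or merges two components meeting S; colouring it blue adds a blue edge
  inside S. So the number of components meeting S, minus one, plus the number of blue edges
  inside S still missing drops in every round, and the game ends after at most m more rounds,
  counting the forced blue edges of the red case.\<close>

lemma builder_wins_mono:
  assumes "builder_wins H1 H2 k R B" "k \<le> k'"
  shows "builder_wins H1 H2 k' R B"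
  using assms
proof (induction arbitrary: k' rule: builder_wins.induct)
  case (ended R B k)
  then show ?case by (simp add: builder_wins.ended)
next
  case (step e R B k)
  then obtain k0 where "k' = Suc k0" "k \<le> k0" by (cases k') auto
  with step show ?case by (auto intro: builder_wins.step)
qed

lemma builder_wins_forced_blue:
  assumes "finite F"
    and "\<forall>e\<in>F. is_edge e \<and> e \<notin> R \<and> e \<notin> B \<and> contains_copy H1 (insert e R)"
    and "builder_wins H1 H2 k R (B \<union> F)"
  shows "builder_wins H1 H2 (card F + k) R B"
  using assms
proof (induction F arbitrary: B rule: finite_induct)
  case empty
  then show ?case by simp
next
  case (insert e F)
  have "builder_wins H1 H2 (card F + k) (insert e R) B"
    using insert.prems(1) by (intro builder_wins.ended) simp
  moreover have "builder_wins H1 H2 (card F + k) R (insert e B)"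
    using insert.prems insert.hyps(2) by (intro insert.IH) auto
  ultimately show ?case
    using insert.prems(1) insert.hyps by (auto intro: builder_wins.step)
qed

lemma online_ramsey_le:
  "builder_wins H1 H2 k {} {} \<Longrightarrow> online_ramsey H1 H2 \<le> k"
  unfolding online_ramsey_def by (rule Least_le)

definition has_path :: "nat set set \<Rightarrow> nat \<Rightarrow> nat \<Rightarrow> bool" where
  "has_path G u v \<longleftrightarrow> (\<exists>ps. ps \<noteq> [] \<and> distinct ps \<and> hd ps = u \<and> last ps = v \<and>
     successively (\<lambda>x y. {x, y} \<in> G) ps)"

lemma has_pathE:
  assumes "has_path G u v"
  obtains ps where "ps \<noteq> []" "distinct ps" "hd ps = u" "last ps = v"
    "successively (\<lambda>x y. {x, y} \<in> G) ps"
  using assms unfolding has_path_def by blast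

lemma has_path_refl: "has_path G u u"
  unfolding has_path_def by (intro exI[of _ "[u]"]) simp

lemma has_path_sym:
  assumes "has_path G u v"
  shows "has_path G v u"
proof -
  obtain ps where "ps \<noteq> []" "distinct ps" "hd ps = u" "last ps = v"
    "successively (\<lambda>x y. {x, y} \<in> G) ps"
    using assms by (rule has_pathE)
  then show ?thesis unfolding has_path_def
    by (intro exI[of _ "rev ps"]) (auto simp: hd_rev last_rev successively_rev insert_commute)
qed

lemma has_path_mono: "has_path G u v \<Longrightarrow> G \<subseteq> G' \<Longrightarrow> has_path G' u v"
  unfolding has_path_def by (blast intro: successively_mono)

lemma successively_edges_invariant:
  assumes "successively (\<lambda>x y. {x, y} \<in> G) ps" "\<And>x y. {x, y} \<in> G \<Longrightarrow> f x = f y"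
  shows "\<forall>z\<in>set ps. f z = f (hd ps)"
  using assms(1)
proof (induction ps rule: induct_list012)
  case (3 x y ps)
  then show ?case using assms(2)[of x y] by auto
qed simp_all

lemma successively_edges_alternate:
  fixes side :: "'a \<Rightarrow> bool"
  assumes "successively (\<lambda>x y. {x, y} \<in> G) ps" "ps \<noteq> []"
    and "\<And>x y. {x, y} \<in> G \<Longrightarrow> side x \<noteq> side y"
  shows "odd (length ps) \<longleftrightarrow> side (hd ps) = side (last ps)"
  using assms(1,2)
proof (induction ps rule: induct_list012)
  case (3 x y ps)
  then have "odd (length (y # ps)) \<longleftrightarrow> side y = side (last (y # ps))"
    and "side x = (\<not> side y)"
    using assms(3)[of x y] by auto
  then show ?case by auto
qed simp_all

lemma odd_cycle_of_path:
  fixes ps :: "nat list"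
  assumes "distinct ps" "successively (\<lambda>x y. {x, y} \<in> R) ps" "odd (length ps)" "length ps \<ge> 3"
  shows "contains_copy C_odd (insert {hd ps, last ps} R)"
proof -
  let ?G = "{{ps ! i, ps ! ((i + 1) mod length ps)} | i. i < length ps}"
  have "?G \<in> C_odd" unfolding C_odd_def using assms by blast
  moreover have "e \<in> insert {hd ps, last ps} R" if "e \<in> ?G" for e
  proof -
    obtain i where i: "i < length ps" "e = {ps ! i, ps ! ((i + 1) mod length ps)}"
      using \<open>e \<in> ?G\<close> by blast
    show ?thesis
    proof (cases "Suc i < length ps")
      case True
      then show ?thesis using i successively_nth[OF assms(2) True] by simp
    next
      case False
      then have "i = length ps - 1" "ps \<noteq> []" using i by auto
      then have "e = {last ps, hd ps}" using i by (simp add: last_conv_nth hd_conv_nth)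
      then show ?thesis by (simp add: insert_commute)
    qed
  qed
  ultimately show ?thesis unfolding contains_copy_def by blast
qed

definition bipartite_labelling :: "nat set set \<Rightarrow> (nat \<Rightarrow> nat) \<Rightarrow> (nat \<Rightarrow> bool) \<Rightarrow> bool" where
  "bipartite_labelling R cmp side \<longleftrightarrow>
     (\<forall>x y. {x, y} \<in> R \<longrightarrow> cmp x = cmp y \<and> side x \<noteq> side y) \<and>
     (\<forall>u v. cmp u = cmp v \<longrightarrow> has_path R u v)"

lemma bipartite_labelling_odd_cycle:
  assumes lab: "bipartite_labelling R cmp side"
    and "cmp u = cmp v" "side u = side v" "u \<noteq> v"
  shows "contains_copy C_odd (insert {u, v} R)"
proof -
  obtain ps where ps: "ps \<noteq> []" "distinct ps" "hd ps = u" "last ps = v"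
    "successively (\<lambda>x y. {x, y} \<in> R) ps"
    using assms(1,2) unfolding bipartite_labelling_def by (blast elim: has_pathE)
  have "odd (length ps)"
    using successively_edges_alternate[OF ps(5,1), of side] lab assms(3) ps(3,4)
    unfolding bipartite_labelling_def by blast
  moreover have "length ps \<noteq> 1" using ps assms(4) by (cases ps) auto
  ultimately have "length ps \<ge> 3" using ps(1) by presburger
  then show ?thesis
    using odd_cycle_of_path[OF ps(2,5) \<open>odd (length ps)\<close>] ps(3,4) by simp
qed

lemma bipartite_labelling_insert:
  assumes lab: "bipartite_labelling R cmp side" and uv: "cmp u \<noteq> cmp v"
  shows "bipartite_labelling (insert {u, v} R)
           (\<lambda>z. if cmp z = cmp v then cmp u else cmp z)
           (\<lambda>z. if cmp z = cmp v \<and> side u = side v then \<not> side z else side z)"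
    (is "bipartite_labelling ?R' ?cmp' ?side'")
proof -
  have edge: "cmp x = cmp y" "side x \<noteq> side y" if "{x, y} \<in> R" for x y
    using lab that unfolding bipartite_labelling_def by blast+
  have path: "has_path R x y" if "cmp x = cmp y" for x y
    using lab that unfolding bipartite_labelling_def by blast
  have edge': "?cmp' x = ?cmp' y \<and> ?side' x \<noteq> ?side' y" if "{x, y} \<in> ?R'" for x y
  proof (cases "{x, y} = {u, v}")
    case True
    then have "x = u \<and> y = v \<or> x = v \<and> y = u" by (auto simp: doubleton_eq_iff)
    then show ?thesis using uv by auto
  next
    case False
    then have "cmp x = cmp y" "side x \<noteq> side y" using that edge[of x y] by auto
    then show ?thesis by auto
  qed
  have cross: "has_path ?R' z1 z2" if z: "cmp z1 = cmp u" "cmp z2 = cmp v" for z1 z2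
  proof -
    obtain p where p: "p \<noteq> []" "distinct p" "hd p = z1" "last p = u"
      "successively (\<lambda>x y. {x, y} \<in> R) p"
      using path[OF z(1)] by (rule has_pathE)
    obtain q where q: "q \<noteq> []" "distinct q" "hd q = v" "last q = z2"
      "successively (\<lambda>x y. {x, y} \<in> R) q"
      using path[OF z(2)[symmetric]] by (rule has_pathE)
    have "\<forall>z\<in>set p. cmp z = cmp u" "\<forall>z\<in>set q. cmp z = cmp v"
      using successively_edges_invariant[where f = cmp, OF p(5) edge(1)]
        successively_edges_invariant[where f = cmp, OF q(5) edge(1)] p(3) q(3) z by auto
    then have "set p \<inter> set q = {}" using uv by auto
    moreover have "successively (\<lambda>x y. {x, y} \<in> ?R') (p @ q)"
      using p(1,4,5) q(1,3,5) by (auto simp: successively_append_iff elim: successively_mono)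
    ultimately show ?thesis
      unfolding has_path_def using p q by (intro exI[of _ "p @ q"]) auto
  qed
  have "has_path ?R' z1 z2" if eq: "?cmp' z1 = ?cmp' z2" for z1 z2
  proof -
    consider "cmp z1 = cmp z2" | "cmp z1 = cmp u" "cmp z2 = cmp v"
      | "cmp z1 = cmp v" "cmp z2 = cmp u"
      using eq by (auto split: if_splits)
    then show ?thesis
    proof cases
      case 1
      then show ?thesis using path has_path_mono by blast
    next
      case 2
      then show ?thesis by (rule cross)
    next
      case 3
      then show ?thesis using cross has_path_sym by blast
    qed
  qed
  with edge' show ?thesis unfolding bipartite_labelling_def by blast
qed

lemma card_image_merge:
  assumes "finite S" "u \<in> S" "v \<in> S" "cmp u \<noteq> cmp v"
  shows "card ((\<lambda>z. if cmp z = cmp v then cmp u else cmp z) ` S) = card (cmp ` S) - 1"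
proof -
  have "(\<lambda>z. if cmp z = cmp v then cmp u else cmp z) ` S = cmp ` S - {cmp v}"
  proof
    show "cmp ` S - {cmp v} \<subseteq> (\<lambda>z. if cmp z = cmp v then cmp u else cmp z) ` S"
      by (auto intro: rev_image_eqI)
  qed (use assms in auto)
  then show ?thesis using assms by (simp add: card_Diff_singleton)
qed

definition star :: "nat \<Rightarrow> nat set \<Rightarrow> nat set set" where
  "star h A = (\<lambda>a. {h, a}) ` A"

lemma card_star: "h \<notin> A \<Longrightarrow> card (star h A) = card A"
  unfolding star_def by (rule card_image) (auto simp: inj_on_def doubleton_eq_iff)

lemma bipartite_labelling_star:
  assumes "h \<notin> A"
  shows "bipartite_labelling (star h A) (\<lambda>z. if z \<in> A then h else z) (\<lambda>z. z \<noteq> h)"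
proof -
  have spoke: "{a, h} \<in> star h A" "{h, a} \<in> star h A" if "a \<in> A" for a
    using that unfolding star_def by (auto simp: insert_commute)
  have "has_path (star h A) u v" if eq: "(if u \<in> A then h else u) = (if v \<in> A then h else v)" for u v
  proof -
    consider "u = v" | "u \<in> A" "v = h" | "u = h" "v \<in> A" | "u \<in> A" "v \<in> A" "u \<noteq> v"
      using eq assms by (auto split: if_splits)
    then show ?thesis
    proof cases
      case 1
      then show ?thesis by (simp add: has_path_refl)
    next
      case 2
      then show ?thesis unfolding has_path_def using assms spoke
        by (intro exI[of _ "[u, h]"]) auto
    next
      case 3
      then show ?thesis unfolding has_path_def using assms spoke
        by (intro exI[of _ "[u, v]"]) auto
    next
      case 4
      then show ?thesis unfolding has_path_def using assms spoke
        by (intro exI[of _ "[u, h, v]"]) auto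
    qed
  qed
  moreover have "(if x \<in> A then h else x) = (if y \<in> A then h else y) \<and> (x \<noteq> h) \<noteq> (y \<noteq> h)"
    if "{x, y} \<in> star h A" for x y
  proof -
    have "x = h \<and> y \<in> A \<or> x \<in> A \<and> y = h"
      using that unfolding star_def by (auto simp: doubleton_eq_iff)
    then show ?thesis using assms by auto
  qed
  ultimately show ?thesis unfolding bipartite_labelling_def by blast
qed

definition pairs :: "nat set \<Rightarrow> nat set set" where
  "pairs S = {e. e \<subseteq> S \<and> card e = 2}"

lemma finite_pairs: "finite S \<Longrightarrow> finite (pairs S)"
  unfolding pairs_def by (rule finite_subset[of _ "Pow S"]) auto

lemma card_pairs: "finite S \<Longrightarrow> card (pairs S) = card S choose 2"
  unfolding pairs_def by (rule n_subsets)

lemma doubleton_in_pairs: "u \<in> S \<Longrightarrow> v \<in> S \<Longrightarrow> u \<noteq> v \<Longrightarrow> {u, v} \<in> pairs S"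
  unfolding pairs_def by auto

lemma double_choose_two: "2 * int (n choose 2) = int n * (int n - 1)"
proof (induction n)
  case (Suc n)
  have "Suc n choose 2 = n + (n choose 2)" by (simp add: numeral_2_eq_2)
  with Suc show ?case by (simp add: algebra_simps)
qed simp

lemma choose_two_add_bound: "(a + c - 1)^2 \<le> 4 * ((a choose 2) + (c choose 2)) + 1"
proof (cases "a + c = 0")
  case False
  have "int (a + c - 1) = int a + int c - 1" using False by linarith
  then have "int ((a + c - 1)^2) = (int a + int c - 1)^2" by simp
  also have "\<dots> \<le> 2 * (int a * (int a - 1)) + 2 * (int c * (int c - 1)) + 1"
  proof -
    have "0 \<le> (int a - int c)^2" by simp
    then show ?thesis by (simp add: power2_eq_square algebra_simps)
  qed
  also have "\<dots> = int (4 * ((a choose 2) + (c choose 2)) + 1)"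
    using double_choose_two[of a] double_choose_two[of c] by simp
  finally show ?thesis by linarith
qed simp

lemma same_side_pair_exists:
  fixes side :: "nat \<Rightarrow> bool"
  assumes S: "finite S" and m: "4 * m \<le> (card S - 1)^2" and B: "card (B \<inter> pairs S) < m"
  shows "\<exists>u\<in>S. \<exists>v\<in>S. u \<noteq> v \<and> side u = side v \<and> {u, v} \<notin> B"
proof (rule ccontr)
  assume none: "\<not> ?thesis"
  define S1 where "S1 = {z \<in> S. side z}"
  define S0 where "S0 = {z \<in> S. \<not> side z}"
  have fin: "finite S1" "finite S0" using S unfolding S1_def S0_def by auto
  have split: "card S = card S1 + card S0"
    using S unfolding S1_def S0_def
    by (subst card_Un_disjoint[symmetric]) (auto intro: arg_cong[where f = card])
  have "pairs S1 \<union> pairs S0 \<subseteq> B \<inter> pairs S"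
    using none unfolding pairs_def S1_def S0_def by (auto simp: card_2_iff)
  then have le: "card (pairs S1 \<union> pairs S0) \<le> card (B \<inter> pairs S)"
    using S by (intro card_mono) (auto intro: finite_pairs)
  have "pairs S1 \<inter> pairs S0 = {}"
    unfolding pairs_def S1_def S0_def by (auto simp: card_2_iff)
  then have eq: "card (pairs S1 \<union> pairs S0) = (card S1 choose 2) + (card S0 choose 2)"
    using fin by (simp add: card_Un_disjoint finite_pairs card_pairs)
  have "4 * m \<le> 4 * ((card S1 choose 2) + (card S0 choose 2)) + 1"
    using m choose_two_add_bound[of "card S1" "card S0"] split by simp
  then show False using le eq B by presburger
qed

lemma contains_Con_spanning_star:
  assumes S: "finite S" "card S = n" "n \<ge> 2" "h \<in> S"
    and hub: "\<forall>w\<in>S - {h}. {h, w} \<in> B" and m: "m \<le> card (B \<inter> pairs S)"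
  shows "contains_copy (Con n m) B"
proof -
  let ?H = "B \<inter> pairs S"
  have spoke: "{h, w} \<in> ?H" "{w, h} \<in> ?H" if "w \<in> S" "w \<noteq> h" for w
    using hub that S(4) doubleton_in_pairs[of h S w] by (auto simp: insert_commute)
  have "S \<noteq> {h}" using S by auto
  then obtain w0 where w0: "w0 \<in> S" "w0 \<noteq> h" using S(4) by blast
  have "verts ?H \<subseteq> S" unfolding verts_def pairs_def by auto
  moreover have "s \<in> verts ?H" if "s \<in> S" for s
    using spoke(1)[OF w0] spoke(1)[OF that] unfolding verts_def by (cases "s = h") auto
  ultimately have verts: "verts ?H = S" by blast
  let ?rel = "{(x, y). {x, y} \<in> ?H}"
  have "(u, h) \<in> ?rel\<^sup>*" "(h, u) \<in> ?rel\<^sup>*" if "u \<in> S" for u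
    using that spoke[of u] by (cases "u = h"; auto)+
  then have "\<forall>u\<in>verts ?H. \<forall>v\<in>verts ?H. (u, v) \<in> ?rel\<^sup>*"
    unfolding verts by (blast intro: rtrancl_trans)
  moreover have "finite ?H" "\<forall>e\<in>?H. is_edge e"
    using finite_pairs[OF S(1)] unfolding pairs_def is_edge_def by (auto simp: card_2_iff)
  ultimately have "?H \<in> Con n m" unfolding Con_def using verts S m by auto
  then show ?thesis unfolding contains_copy_def by blast
qed

lemma builder_wins_bipartite_phase:
  assumes n: "n \<ge> 2" and m: "4 * m \<le> (n - 1)^2"
    and S: "finite S" "card S = n" "h \<in> S"
  shows "\<forall>w\<in>S - {h}. {h, w} \<in> B \<Longrightarrow> bipartite_labelling R cmp side \<Longrightarrow>
    builder_wins C_odd (Con n m) (card (cmp ` S) - 1 + (m - card (B \<inter> pairs S))) R B"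
proof (induction "card (cmp ` S) - 1 + (m - card (B \<inter> pairs S))"
    arbitrary: R B cmp side rule: less_induct)
  case (less B cmp R side)
  let ?k = "card (cmp ` S) - 1 + (m - card (B \<inter> pairs S))"
  show ?case
  proof (cases "m \<le> card (B \<inter> pairs S)")
    case True
    then show ?thesis
      using contains_Con_spanning_star[OF S(1,2) n S(3) less.prems(1)] by (simp add: builder_wins.ended)
  next
    case False
    then obtain u v where uv: "u \<in> S" "v \<in> S" "u \<noteq> v" "side u = side v" "{u, v} \<notin> B"
      using same_side_pair_exists[OF S(1), of m B side] m S(2) by auto
    have "{u, v} \<notin> R"
      using less.prems(2) uv(4) unfolding bipartite_labelling_def by blast
    moreover have "is_edge {u, v}" unfolding is_edge_def using uv(3) by blast
    moreover have "builder_wins C_odd (Con n m) (?k - 1) R (insert {u, v} B)"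
    proof -
      have "card (insert {u, v} B \<inter> pairs S) = Suc (card (B \<inter> pairs S))"
        using doubleton_in_pairs[OF uv(1-3)] uv(5) finite_pairs[OF S(1)]
        by (simp add: Int_insert_left)
      then show ?thesis
        using less.hyps[OF _ _ less.prems(2), of "insert {u, v} B"] less.prems(1) False by simp
    qed
    moreover have "builder_wins C_odd (Con n m) (?k - 1) (insert {u, v} R) B"
    proof (cases "cmp u = cmp v")
      case True
      then show ?thesis
        using bipartite_labelling_odd_cycle[OF less.prems(2) True uv(4,3)] by (simp add: builder_wins.ended)
    next
      case False
      have "card {cmp u, cmp v} \<le> card (cmp ` S)"
        using uv S(1) by (intro card_mono) auto
      then show ?thesis
        using less.hyps[OF _ less.prems(1) bipartite_labelling_insert[OF less.prems(2) False]]
          card_image_merge[OF S(1) uv(1,2) False] False by simp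
    qed
    moreover have "?k = Suc (?k - 1)" using False by simp
    ultimately show ?thesis using uv(5) by (metis builder_wins.step)
  qed
qed

lemma builder_wins_blue_star_full:
  assumes n: "n \<ge> 2" and m: "4 * m \<le> (n - 1)^2" "n - 1 \<le> m"
    and W: "finite W" "card W = n - 1" "h \<notin> W" and L: "h \<notin> L"
  shows "builder_wins C_odd (Con n m) m (star h L) (star h W)"
proof -
  let ?S = "insert h W" and ?cmp = "\<lambda>z. if z \<in> L then h else z"
  have S: "finite ?S" "card ?S = n" using W n by auto
  have "builder_wins C_odd (Con n m)
      (card (?cmp ` ?S) - 1 + (m - card (star h W \<inter> pairs ?S))) (star h L) (star h W)"
    by (rule builder_wins_bipartite_phase[OF n m(1) S insertI1])
      (use bipartite_labelling_star[OF L] in \<open>auto simp: star_def\<close>)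
  moreover have "star h W \<subseteq> pairs ?S"
    using W(3) unfolding star_def by (auto intro: doubleton_in_pairs)
  then have "card (star h W \<inter> pairs ?S) = n - 1"
    using card_star[OF W(3)] W(2) by (simp add: Int_absorb2)
  moreover have "card (?cmp ` ?S) \<le> n" using card_image_le[OF S(1), of ?cmp] S(2) by simp
  ultimately show ?thesis using m(2) by (elim builder_wins_mono) linarith
qed

lemma builder_wins_red_star_full:
  assumes n: "n \<ge> 2" and m: "4 * m \<le> (n - 1)^2" "n - 1 \<le> m"
    and L: "finite L" "card L = n" "h \<notin> L"
  shows "builder_wins C_odd (Con n m) m (star h L) (star h W)"
proof -
  obtain t where t: "t \<in> L" using L n by fastforce
  let ?F = "star t (L - {t})" and ?B = "star h W \<union> star t (L - {t})"
  have F: "finite ?F" "card ?F = n - 1"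
    using L t card_star[of t "L - {t}"] unfolding star_def by auto
  have forced: "\<forall>e\<in>?F. is_edge e \<and> e \<notin> star h L \<and> e \<notin> star h W \<and>
      contains_copy C_odd (insert e (star h L))"
  proof
    fix e assume "e \<in> ?F"
    then obtain l where l: "l \<in> L" "l \<noteq> t" "e = {t, l}" unfolding star_def by auto
    have "h \<noteq> t" "h \<noteq> l" using t l L(3) by auto
    moreover have "contains_copy C_odd (insert {hd [t, h, l], last [t, h, l]} (star h L))"
      using l t \<open>h \<noteq> t\<close> \<open>h \<noteq> l\<close> unfolding star_def
      by (intro odd_cycle_of_path) (auto simp: insert_commute)
    ultimately show "is_edge e \<and> e \<notin> star h L \<and> e \<notin> star h W \<and>
        contains_copy C_odd (insert e (star h L))"
      using l unfolding is_edge_def star_def by (auto simp: doubleton_eq_iff)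
  qed
  have "builder_wins C_odd (Con n m)
      (card ((\<lambda>z. if z \<in> L then h else z) ` L) - 1 + (m - card (?B \<inter> pairs L))) (star h L) ?B"
    by (rule builder_wins_bipartite_phase[OF n m(1) L(1,2) t])
      (use bipartite_labelling_star[OF L(3)] in \<open>auto simp: star_def\<close>)
  moreover have "?F \<subseteq> ?B \<inter> pairs L"
    using t unfolding star_def by (auto intro: doubleton_in_pairs)
  then have "n - 1 \<le> card (?B \<inter> pairs L)"
    using F finite_pairs[OF L(1)] by (metis card_mono finite_Int)
  moreover have "(\<lambda>z. if z \<in> L then h else z) ` L = {h}" using t by auto
  ultimately have "builder_wins C_odd (Con n m) (m - (n - 1)) (star h L) ?B"
    by (elim builder_wins_mono) simp
  then have "builder_wins C_odd (Con n m) (card ?F + (m - (n - 1))) (star h L) (star h W)"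
    by (intro builder_wins_forced_blue F(1) forced)
  then show ?thesis using F(2) m(2) by simp
qed

lemma builder_wins_star_full:
  assumes n: "n \<ge> 2" and m: "4 * m \<le> (n - 1)^2" "n - 1 \<le> m"
    and "finite L" "finite W" "h \<notin> L" "h \<notin> W" "card L = n \<or> card W = n - 1"
  shows "builder_wins C_odd (Con n m) (m + t) (star h L) (star h W)"
proof -
  have "builder_wins C_odd (Con n m) m (star h L) (star h W)"
    using assms(4-) builder_wins_red_star_full[OF n m] builder_wins_blue_star_full[OF n m] by blast
  then show ?thesis by (rule builder_wins_mono) simp
qed

lemma builder_wins_star_phase:
  assumes n: "n \<ge> 2" and m: "4 * m \<le> (n - 1)^2" "n - 1 \<le> m"
    and "finite L" "finite W" "h \<notin> L" "h \<notin> W" "card L \<le> n" "card W \<le> n - 1"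
    and "2 * n - 2 \<le> card L + card W + t"
  shows "builder_wins C_odd (Con n m) (m + t) (star h L) (star h W)"
  using assms(4-)
proof (induction t arbitrary: L W)
  case 0
  then have "card L = n \<or> card W = n - 1" by linarith
  with 0 show ?case using builder_wins_star_full[OF n m] by blast
next
  case (Suc t)
  show ?case
  proof (cases "card L = n \<or> card W = n - 1")
    case True
    then show ?thesis using builder_wins_star_full[OF n m] Suc.prems by blast
  next
    case False
    have "finite (insert h (L \<union> W))" using Suc.prems(1,2) by simp
    then obtain y where y: "y \<notin> insert h (L \<union> W)"
      using ex_new_if_finite[OF infinite_UNIV_nat] by blast
    have spoke: "star h (insert y A) = insert {h, y} (star h A)" for A
      unfolding star_def by simp
    have "is_edge {h, y}" "{h, y} \<notin> star h L" "{h, y} \<notin> star h W"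
      using y unfolding is_edge_def star_def by (auto simp: doubleton_eq_iff)
    moreover have "builder_wins C_odd (Con n m) (m + t) (insert {h, y} (star h L)) (star h W)"
      using Suc.IH[of "insert y L" W] Suc.prems False y spoke by simp
    moreover have "builder_wins C_odd (Con n m) (m + t) (star h L) (insert {h, y} (star h W))"
      using Suc.IH[of L "insert y W"] Suc.prems False y spoke by simp
    ultimately have "builder_wins C_odd (Con n m) (Suc (m + t)) (star h L) (star h W)"
      by (rule builder_wins.step)
    then show ?thesis by simp
  qed
qed

theorem theorem3:
  "\<exists>C::real. C > 0 \<and>
     (\<forall>n m :: nat. n \<ge> 3 \<longrightarrow> n - 1 \<le> m \<longrightarrow> real m \<le> (real n - 1)^2 / 4 \<longrightarrow>
        (\<exists>k. builder_wins C_odd (Con n m) k {} {}) \<and>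
        real (online_ramsey C_odd (Con n m))
          \<le> real n + 2 * real m + C * sqrt (real m - real n + 1))"
proof (rule exI[of _ 1], intro conjI allI impI)
  fix n m :: nat
  assume n: "n \<ge> 3" and m: "n - 1 \<le> m" "real m \<le> (real n - 1)^2 / 4"
  have "real (4 * m) \<le> real ((n - 1)^2)" using n m(2) by (simp add: of_nat_diff)
  then have "4 * m \<le> (n - 1)^2" by (simp only: of_nat_le_iff)
  then have "builder_wins C_odd (Con n m) (m + (2 * n - 2)) (star 0 {}) (star 0 {})"
    using n m(1) by (intro builder_wins_star_phase) auto
  then have wins: "builder_wins C_odd (Con n m) (m + 2 * n - 2) {} {}"
    using n by (simp add: star_def)
  then show "\<exists>k. builder_wins C_odd (Con n m) k {} {}" by blast
  have "online_ramsey C_odd (Con n m) \<le> n + 2 * m"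
    using online_ramsey_le[OF wins] m(1) by linarith
  then have "real (online_ramsey C_odd (Con n m)) \<le> real n + 2 * real m" by simp
  moreover have "0 \<le> sqrt (real m - real n + 1)" using m(1) n by simp
  ultimately show "real (online_ramsey C_odd (Con n m))
      \<le> real n + 2 * real m + 1 * sqrt (real m - real n + 1)" by linarith
qed simp

end
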